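(* Let $d\ge1$. For any $\nu>0$ and any $M\ge\big[-d\cdot W_{-1}\big(-\nu^{2/d}/(2\pi e)\big)\big]^{1/2}$, it holds that \[\int_{\{u\in\mathbb{R}^d:\ \|u\|\ge M\}}e^{-\|u\|^2/2}\,du\le\nu.\]
   Context: $W_{-1}$ denotes the negative real branch of the Lambert $W$ function, i.e., the inverse of $t\mapsto te^t$ restricted to $(-\infty,-1]$, mapping $[-1/e,0)$ onto $(-\infty,-1]$; by convention $W_{-1}(t)=0$ if $t<-1/e$. $\|\cdot\|$ is the Euclidean norm. *)

theory Defs
  imports "HOL-Analysis.Analysis"
begin

text \<open>Negative real branch of the Lambert W function: inverse of
  w \<mapsto> w * exp w restricted to (-\<infinity>,-1], defined on [-1/e,0);
  by convention W_{-1}(t) = 0 for t < -1/e.\<close>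
definition lambertW_m1 :: "real \<Rightarrow> real" where
  "lambertW_m1 t = (if t < - exp (-1) then 0
                    else (THE w. w \<le> -1 \<and> w * exp w = t))"

end

theory Submission
  imports Defs "HOL-Probability.Distributions" "HOL-Real_Asymp.Real_Asymp"
begin

text \<open>Chernoff's trick: for \<open>0 < s \<le> 1\<close> the integrand is bounded on the tail region by
  \<open>exp(-(1-s) M^2/2) exp(-s \<parallel>u\<parallel>^2/2)\<close>, and the second factor integrates to
  \<open>(2\<pi>/s)^(d/2)\<close> over all of \<open>\<real>^d\<close>. Taking \<open>s = 1/x\<close> with \<open>x = M^2/d\<close> bounds the tail
  by \<open>(2\<pi> x e^(1-x))^(d/2)\<close>, which is at most \<open>\<nu>\<close> iff \<open>x e^(-x) \<le> \<nu>^(2/d)/(2\<pi>e) = -t\<close>.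
  Since \<open>w e^w\<close> decreases on \<open>(-\<infinity>,-1]\<close>, this follows from \<open>x \<ge> -W\<^sub>-\<^sub>1(t)\<close>. If \<open>t < -1/e\<close>,
  then \<open>x = 1\<close> (i.e. the full Gaussian integral \<open>(2\<pi>)^(d/2)\<close>) already works.\<close>

lemma nn_integral_gaussian_real:
  fixes s :: real
  assumes "s > 0"
  shows "(\<integral>\<^sup>+x. ennreal (exp (- s * x\<^sup>2 / 2)) \<partial>lborel) = ennreal (sqrt (2 * pi / s))"
proof -
  define \<sigma> where "\<sigma> = 1 / sqrt s"
  have "\<sigma> > 0" and \<sigma>_sq: "\<sigma>\<^sup>2 = 1 / s"
    using assms by (simp_all add: \<sigma>_def power_divide)
  have "exp (- s * x\<^sup>2 / 2) = sqrt (2 * pi / s) * normal_density 0 \<sigma> x" for x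
    using assms by (simp add: normal_density_def \<sigma>_sq real_sqrt_divide field_simps)
  then have "ennreal (exp (- s * x\<^sup>2 / 2))
      = ennreal (sqrt (2 * pi / s)) * ennreal (normal_density 0 \<sigma> x)" for x
    using assms by (simp add: ennreal_mult)
  then have "(\<integral>\<^sup>+x. ennreal (exp (- s * x\<^sup>2 / 2)) \<partial>lborel)
      = ennreal (sqrt (2 * pi / s)) * (\<integral>\<^sup>+x. ennreal (normal_density 0 \<sigma> x) \<partial>lborel)"
    by (simp add: nn_integral_cmult)
  also have "(\<integral>\<^sup>+x. ennreal (normal_density 0 \<sigma> x) \<partial>lborel) = 1"
    using \<open>\<sigma> > 0\<close> by (subst nn_integral_eq_integral) auto
  finally show ?thesis
    by simp
qed

lemma nn_integral_gaussian:
  fixes s :: real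
  assumes "s > 0"
  shows "(\<integral>\<^sup>+u. ennreal (exp (- s * (norm (u::'a::euclidean_space))\<^sup>2 / 2)) \<partial>lborel)
    = ennreal ((2 * pi / s) powr (DIM('a) / 2))"
proof -
  have "(norm u)\<^sup>2 = (\<Sum>b\<in>Basis. (u \<bullet> b)\<^sup>2)" for u :: 'a
    unfolding power2_norm_eq_inner by (subst euclidean_inner) (simp add: power2_eq_square)
  then have "exp (- s * (norm u)\<^sup>2 / 2) = (\<Prod>b\<in>Basis. exp (- s * (u \<bullet> b)\<^sup>2 / 2))" for u :: 'a
    by (simp add: exp_sum[symmetric] sum_distrib_left sum_divide_distrib)
  then have "(\<integral>\<^sup>+u. ennreal (exp (- s * (norm (u::'a))\<^sup>2 / 2)) \<partial>lborel)
      = (\<integral>\<^sup>+u. (\<Prod>b\<in>(Basis::'a set). ennreal (exp (- s * (u \<bullet> b)\<^sup>2 / 2))) \<partial>lborel)"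
    by (simp add: prod_ennreal)
  also have "\<dots> = (\<Prod>b\<in>(Basis::'a set). \<integral>\<^sup>+x. ennreal (exp (- s * x\<^sup>2 / 2)) \<partial>lborel)"
    by (rule nn_integral_lborel_prod) auto
  also have "\<dots> = ennreal (sqrt (2 * pi / s) ^ DIM('a))"
    by (simp only: nn_integral_gaussian_real[OF assms] prod_constant)
       (rule ennreal_power, use assms in simp)
  also have "sqrt (2 * pi / s) ^ DIM('a) = (2 * pi / s) powr (DIM('a) / 2)"
    using assms by (simp add: powr_half_sqrt[symmetric] powr_power)
  finally show ?thesis .
qed

lemma gaussian_tail_le_chernoff:
  fixes s M :: real
  assumes "0 < s" "s \<le> 1" "0 \<le> M"
  shows "(LINT u:{u::'a::euclidean_space. norm u \<ge> M}|lborel. exp (- (norm u)\<^sup>2 / 2))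
    \<le> exp (- (1 - s) * M\<^sup>2 / 2) * (2 * pi / s) powr (DIM('a) / 2)"
proof -
  let ?A = "{u::'a. norm u \<ge> M}"
  let ?c = "exp (- (1 - s) * M\<^sup>2 / 2)"
  let ?g = "\<lambda>u::'a. ennreal ?c * ennreal (exp (- s * (norm u)\<^sup>2 / 2))"
  have integral_g: "(\<integral>\<^sup>+u. ?g u \<partial>lborel) = ennreal ?c * ennreal ((2 * pi / s) powr (DIM('a) / 2))"
    by (subst nn_integral_cmult) (simp, subst nn_integral_gaussian[OF assms(1)], rule refl)
  have dominated: "ennreal (indicator ?A u *\<^sub>R exp (- (norm u)\<^sup>2 / 2)) \<le> ?g u" for u
  proof (cases "u \<in> ?A")
    case True
    then have "(1 - s) * M\<^sup>2 \<le> (1 - s) * (norm u)\<^sup>2"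
      using assms by (intro mult_left_mono power_mono) auto
    then have "exp (- (norm u)\<^sup>2 / 2) \<le> ?c * exp (- s * (norm u)\<^sup>2 / 2)"
      by (simp add: exp_add[symmetric] algebra_simps)
    then show ?thesis
      using True by (simp add: ennreal_mult[symmetric])
  qed simp
  have "(LINT u:?A|lborel. exp (- (norm u)\<^sup>2 / 2))
      = enn2real (\<integral>\<^sup>+u. ennreal (indicator ?A u *\<^sub>R exp (- (norm u)\<^sup>2 / 2)) \<partial>lborel)"
    unfolding set_lebesgue_integral_def
    by (rule integral_eq_nn_integral) (auto split: split_indicator)
  also have "\<dots> \<le> enn2real (\<integral>\<^sup>+u. ?g u \<partial>lborel)"
    by (rule enn2real_mono[OF nn_integral_mono[OF dominated]])
       (simp only: integral_g ennreal_mult_less_top, simp)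
  also have "\<dots> = ?c * (2 * pi / s) powr (DIM('a) / 2)"
    unfolding integral_g by (subst ennreal_mult[symmetric]) auto
  finally show ?thesis .
qed

lemma gaussian_tail_le_powr:
  fixes x M :: real
  assumes "1 \<le> x" "x * DIM('a) \<le> M\<^sup>2" "0 \<le> M"
  shows "(LINT u:{u::'a::euclidean_space. norm u \<ge> M}|lborel. exp (- (norm u)\<^sup>2 / 2))
    \<le> (2 * pi * x * exp (1 - x)) powr (DIM('a) / 2)"
proof -
  let ?d = "real DIM('a)"
  have "- (1 - 1 / x) * M\<^sup>2 / 2 \<le> - (1 - 1 / x) * (x * ?d) / 2"
    using assms by (intro divide_right_mono mult_left_mono_neg) auto
  also have "\<dots> = (1 - x) * (?d / 2)"
    using assms(1) by (simp add: field_simps)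
  finally have exp_le: "exp (- (1 - 1 / x) * M\<^sup>2 / 2) \<le> exp (1 - x) powr (?d / 2)"
    by (simp add: exp_powr_real)
  have "(LINT u:{u::'a. norm u \<ge> M}|lborel. exp (- (norm u)\<^sup>2 / 2))
      \<le> exp (- (1 - 1 / x) * M\<^sup>2 / 2) * (2 * pi / (1 / x)) powr (?d / 2)"
    by (rule gaussian_tail_le_chernoff) (use assms in auto)
  also have "\<dots> \<le> exp (1 - x) powr (?d / 2) * (2 * pi * x) powr (?d / 2)"
    using exp_le by (simp add: mult_right_mono)
  also have "\<dots> = (2 * pi * x * exp (1 - x)) powr (?d / 2)"
    by (simp add: powr_mult)
  finally show ?thesis .
qed

lemma mult_exp_strict_decreasing:
  fixes a b :: real
  assumes "a < b" "b \<le> -1"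
  shows "b * exp b < a * exp a"
proof -
  define d where "d = b - a"
  have "0 < d"
    using assms(1) by (simp add: d_def)
  then have "1 + d < exp d"
    using exp_minus_greater[of "- d"] by simp
  moreover have "b * (exp d - 1) \<le> - (exp d - 1)"
    using assms(2) \<open>1 + d < exp d\<close> \<open>0 < d\<close> by (intro mult_right_mono[of b "-1", simplified]) auto
  ultimately have "b * exp d < a"
    by (simp add: d_def algebra_simps)
  then have "b * exp d * exp a < a * exp a"
    by simp
  then show ?thesis
    by (simp add: d_def mult.assoc exp_add[symmetric])
qed

lemma ex1_mult_exp_eq_le_minus_one:
  fixes t :: real
  assumes "- exp (-1) \<le> t" "t < 0"
  shows "\<exists>!w. w \<le> -1 \<and> w * exp w = t"
proof -
  have "((\<lambda>w::real. w * exp w) \<longlongrightarrow> 0) at_bot"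
    by real_asymp
  then have "eventually (\<lambda>w::real. t < w * exp w) at_bot"
    using assms(2) by (rule order_tendstoD)
  then obtain a where "a \<le> -1" "t \<le> a * exp a"
    unfolding eventually_at_bot_linorder by (metis less_eq_real_def min.cobounded1 min.cobounded2)
  moreover have "(-1) * exp (-1) \<le> t"
    using assms(1) by simp
  ultimately obtain w where "w \<le> -1" "w * exp w = t"
    using IVT2[of "\<lambda>w. w * exp w" "-1" t a] by (auto intro!: continuous_intros)
  then show ?thesis
    by (metis linorder_neqE_linordered_idom mult_exp_strict_decreasing less_irrefl)
qed

lemma lambertW_m1_correct:
  fixes t :: real
  assumes "- exp (-1) \<le> t" "t < 0"
  shows "lambertW_m1 t \<le> -1" "lambertW_m1 t * exp (lambertW_m1 t) = t"
  using theI'[OF ex1_mult_exp_eq_le_minus_one[OF assms]] assms(1)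
  by (simp_all add: lambertW_m1_def)

lemma mult_exp_minus_le_if_ge_lambertW_m1:
  fixes t x :: real
  assumes "- exp (-1) \<le> t" "t < 0" "- lambertW_m1 t \<le> x"
  shows "x * exp (- x) \<le> - t"
proof -
  let ?W = "lambertW_m1 t"
  have "?W * exp ?W \<le> (- x) * exp (- x)"
    using mult_exp_strict_decreasing[of "- x" ?W] lambertW_m1_correct(1)[OF assms(1,2)] assms(3)
    by (cases "- x = ?W") auto
  then show ?thesis
    using lambertW_m1_correct(2)[OF assms(1,2)] by simp
qed

lemma neg_lambertW_m1_le_square_div:
  fixes t n M :: real
  assumes "- exp (-1) \<le> t" "t < 0" "n > 0" "sqrt (- n * lambertW_m1 t) \<le> M"
  shows "0 \<le> M" "- lambertW_m1 t \<le> M\<^sup>2 / n"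
proof -
  have "0 \<le> - n * lambertW_m1 t"
    using lambertW_m1_correct(1)[OF assms(1,2)] assms(3) by (simp add: mult_le_0_iff)
  then have "0 \<le> sqrt (- n * lambertW_m1 t)"
    by simp
  then show "0 \<le> M"
    using assms(4) by linarith
  show "- lambertW_m1 t \<le> M\<^sup>2 / n"
    using sqrt_le_D[OF assms(4)] by (subst pos_le_divide_eq[OF assms(3)]) (simp add: algebra_simps)
qed

theorem lemma3p6:
  fixes \<nu> M :: real
  assumes "\<nu> > 0"
    and "M \<ge> sqrt (- real DIM('a::euclidean_space)
            * lambertW_m1 (- (\<nu> powr (2 / real DIM('a))) / (2 * pi * exp 1)))"
  shows "(LINT u:{u::'a. norm u \<ge> M}|lborel. exp (- (norm u)\<^sup>2 / 2)) \<le> \<nu>"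
proof -
  define n where "n = real DIM('a)"
  define t where "t = - (\<nu> powr (2 / n)) / (2 * pi * exp 1)"
  have "n > 0" "t < 0"
    using assms(1) by (simp_all add: n_def t_def)
  have M: "sqrt (- n * lambertW_m1 t) \<le> M"
    using assms(2) by (simp add: n_def t_def)
  obtain x where "0 \<le> x" "x * exp (- x) \<le> - t"
    and tail: "(LINT u:{u::'a. norm u \<ge> M}|lborel. exp (- (norm u)\<^sup>2 / 2))
      \<le> (2 * pi * x * exp (1 - x)) powr (n / 2)"
  proof (cases "t < - exp (-1)")
    case True
    then show ?thesis
      using that[of 1] gaussian_tail_le_chernoff[of 1 M, where 'a='a] M by (simp add: n_def lambertW_m1_def)
  next
    case False
    then have t: "- exp (-1) \<le> t"
      by simp
    have "0 \<le> M" and W: "- lambertW_m1 t \<le> M\<^sup>2 / n"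
      using neg_lambertW_m1_le_square_div[OF t \<open>t < 0\<close> \<open>n > 0\<close> M] by auto
    moreover have "1 \<le> M\<^sup>2 / n"
      using W lambertW_m1_correct(1)[OF t \<open>t < 0\<close>] by linarith
    ultimately show ?thesis
      using that[of "M\<^sup>2 / n"] gaussian_tail_le_powr[of "M\<^sup>2 / n" M, where 'a='a] \<open>n > 0\<close>
        mult_exp_minus_le_if_ge_lambertW_m1[OF t \<open>t < 0\<close> W] by (simp add: n_def)
  qed
  then have "2 * pi * x * exp (1 - x) \<le> \<nu> powr (2 / n)"
    by (simp add: t_def exp_diff exp_minus field_simps)
  then have "(2 * pi * x * exp (1 - x)) powr (n / 2) \<le> (\<nu> powr (2 / n)) powr (n / 2)"
    using \<open>0 \<le> x\<close> \<open>n > 0\<close> by (intro powr_mono2) auto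
  also have "\<dots> = \<nu>"
    using \<open>n > 0\<close> assms(1) by (simp add: powr_powr)
  finally show ?thesis
    using tail by linarith
qed

end
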